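(* In the setting below, let $\Delta=\{x\in\mathbb{R}[T_PM,T_PM]: A(v)x(v)=0\text{ for all }v\in T_PM\}$. Then: \begin{enumerate} \item if $x\in\mathbb{R}[T_PM,T_PM]$ and $f\in\mathbb{R}[T_PM,\mathbb{R}]$ is nonzero with $f\cdot x\in\Delta$, then $x\in\Delta$; \item if $T:T_PM\to T_PM$ is the differential at $P$ of a local isometry of $M$ fixing $P$ and $x\in\Delta$, then the polynomial map $Tx$ defined by $(Tx)(v)=T\,x(T^{-1}v)$ also lies in $\Delta$. \end{enumerate}
   Context: $M$ is a locally isotropic pseudo-Riemannian manifold of signature $(p,q)$, $q>p\ge2$ (locally isotropic: for every $P$ and nonzero $x,y\in T_PM$ with $(x,x)=(y,y)$ some local isometry fixing $P$ has differential mapping $x$ to $y$), $P\in M$, $n\ge1$, and $S:T_PM\to\mathrm{Hom}(T_PM,T_PM)$, $S\not\equiv0$, satisfies: each $S(v)$ self-adjoint; $S(v)v=0$; $S(-v)=-S(v)$; $S(Tv)=T\circ S(v)\circ T^{-1}$ for differentials $T$ of local isometries fixing $P$; and $S$ is a homogeneous polynomial of degree $2n+1$ in the coordinates of $v$. The spectrum of $S(v)$ for unit timelike $v$ is $\{0,\pm\lambda_1,\dots,\pm\lambda_l\}$, $\lambda_i>0$, $l\ge1$; $\sigma_k(\lambda)$ is the $k$-th elementary symmetric function of $\lambda_1^2,\dots,\lambda_l^2$; and $A(v)=S(v)^{2l}+\sum_{k=1}^l\sigma_k(\lambda)(v,v)^{(2n+1)k}S(v)^{2l-2k}$. $\mathbb{R}[T_PM,W]$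 denotes polynomial maps $T_PM\to W$. *)

theory Defs
  imports "HOL-Analysis.Analysis"
begin

text \<open>The tangent space T_P M is modelled as real^'d (coordinates v$i).
  The metric at P is given by a symmetric matrix Gm: (u,v) = u \<bullet> (Gm *v v).\<close>

definition gform :: "real^'d^'d \<Rightarrow> real^'d \<Rightarrow> real^'d \<Rightarrow> real" where
  "gform Gm u v = u \<bullet> (Gm *v v)"

definition has_signature :: "real^'d^'d \<Rightarrow> nat \<Rightarrow> nat \<Rightarrow> bool" where
  "has_signature Gm p q \<longleftrightarrow> transpose Gm = Gm \<and>
     (\<exists>B (d::'d \<Rightarrow> real). invertible B \<and> (\<forall>i. d i = -1 \<or> d i = (1::real)) \<and>
        transpose B ** Gm ** B = (\<chi> i j. if i = j then d i else 0) \<and>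
        card {i. d i = -1} = p \<and> card {i. d i = 1} = q)"

inductive poly_fun :: "(real^'d \<Rightarrow> real) \<Rightarrow> bool" where
  const: "poly_fun (\<lambda>v. c)"
| coord: "poly_fun (\<lambda>v. v $ i)"
| add: "poly_fun f \<Longrightarrow> poly_fun g \<Longrightarrow> poly_fun (\<lambda>v. f v + g v)"
| mult: "poly_fun f \<Longrightarrow> poly_fun g \<Longrightarrow> poly_fun (\<lambda>v. f v * g v)"

definition homog_poly_fun :: "(real^'d \<Rightarrow> real) \<Rightarrow> nat \<Rightarrow> bool" where
  "homog_poly_fun f k \<longleftrightarrow> poly_fun f \<and> (\<forall>t v. f (t *\<^sub>R v) = t ^ k * f v)"

definition poly_map :: "(real^'d \<Rightarrow> real^'d) \<Rightarrow> bool" where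
  "poly_map x \<longleftrightarrow> (\<forall>i. poly_fun (\<lambda>v. x v $ i))"

definition mpow :: "real^'d^'d \<Rightarrow> nat \<Rightarrow> real^'d^'d" where
  "mpow M k = (((**) M) ^^ k) (mat 1)"

definition cspectrum :: "real^'d^'d \<Rightarrow> complex set" where
  "cspectrum M = {c. det (\<chi> i j. complex_of_real (M $ i $ j) - (if i = j then c else 0)) = 0}"

definition sigma :: "(nat \<Rightarrow> real) \<Rightarrow> nat \<Rightarrow> nat \<Rightarrow> real" where
  "sigma lam l k = (\<Sum>I\<in>{I. I \<subseteq> {1..l} \<and> card I = k}. \<Prod>i\<in>I. (lam i)\<^sup>2)"

definition Amat :: "real^'d^'d \<Rightarrow> (real^'d \<Rightarrow> real^'d^'d) \<Rightarrow> (nat \<Rightarrow> real) \<Rightarrow> nat \<Rightarrow> nat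
    \<Rightarrow> real^'d \<Rightarrow> real^'d^'d" where
  "Amat Gm S lam l n v = mpow (S v) (2*l) +
     (\<Sum>k\<in>{1..l}. (sigma lam l k * (gform Gm v v) ^ ((2*n+1)*k)) *\<^sub>R mpow (S v) (2*l - 2*k))"

definition Delta :: "real^'d^'d \<Rightarrow> (real^'d \<Rightarrow> real^'d^'d) \<Rightarrow> (nat \<Rightarrow> real) \<Rightarrow> nat \<Rightarrow> nat
    \<Rightarrow> (real^'d \<Rightarrow> real^'d) set" where
  "Delta Gm S lam l n = {x. poly_map x \<and> (\<forall>v. Amat Gm S lam l n v *v x v = 0)}"

end

theory Submission
  imports Defs "HOL-Computational_Algebra.Polynomial"
begin

text \<open>For the first claim, \<open>A(v) x(v)\<close> vanishes wherever \<open>f\<close> does not, and the non-vanishing set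
  of a nonzero polynomial is dense: on each line through a point with \<open>f \<noteq> 0\<close>, \<open>f\<close> restricts to a
  nonzero polynomial in one variable, which has finitely many roots. Continuity of \<open>v \<mapsto> A(v) x(v)\<close>
  does the rest. For the second, \<open>A\<close> is built from \<open>S\<close> and the quadratic form alone, so the
  equivariance of \<open>S\<close> and the isometry property of \<open>T\<close> give \<open>A(T u) (T y) = T (A(u) y)\<close>.\<close>

lemma poly_fun_continuous_on: "poly_fun f \<Longrightarrow> continuous_on U f"
  by (induction rule: poly_fun.induct) (auto intro!: continuous_intros)

lemma poly_map_continuous_on:
  assumes "poly_map x"
  shows "continuous_on U x"
proof -
  have "continuous_on U (\<lambda>v. \<chi> i. x v $ i)"
    by (intro continuous_on_vec_lambda poly_fun_continuous_on) (use assms in \<open>simp add: poly_map_def\<close>)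
  then show ?thesis by simp
qed

lemma poly_fun_sum:
  "finite A \<Longrightarrow> (\<And>k. k \<in> A \<Longrightarrow> poly_fun (g k)) \<Longrightarrow> poly_fun (\<lambda>v. \<Sum>k\<in>A. g k v)"
proof (induction A rule: finite_induct)
  case empty
  show ?case using poly_fun.const[of 0] by simp
next
  case (insert a A)
  then show ?case by (simp add: poly_fun.add)
qed

lemma poly_fun_compose:
  assumes "poly_fun f" "poly_map y"
  shows "poly_fun (\<lambda>v. f (y v))"
  using assms(1)
proof (induction rule: poly_fun.induct)
  case (coord i)
  show ?case using assms(2) by (simp add: poly_map_def)
qed (auto intro: poly_fun.intros)

lemma poly_map_id: "poly_map (\<lambda>v. v)"
  by (simp add: poly_map_def poly_fun.coord)

lemma poly_map_compose: "poly_map x \<Longrightarrow> poly_map y \<Longrightarrow> poly_map (\<lambda>v. x (y v))"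
  unfolding poly_map_def using poly_fun_compose[of "\<lambda>u. x u $ _" y] by (simp add: poly_map_def)

lemma poly_map_matrix_vector_mult:
  assumes "poly_map x"
  shows "poly_map (\<lambda>v. A *v x v)"
  unfolding poly_map_def matrix_vector_mult_def
  using assms by (auto simp: poly_map_def intro!: poly_fun_sum poly_fun.mult poly_fun.const)

lemma poly_fun_along_line: "poly_fun f \<Longrightarrow> \<exists>p. \<forall>t. f (a + t *\<^sub>R b) = poly p t"
proof (induction rule: poly_fun.induct)
  case (const c)
  show ?case by (rule exI[of _ "[:c:]"]) simp
next
  case (coord i)
  show ?case by (rule exI[of _ "[:a $ i, b $ i:]"]) simp
next
  case (add f g)
  then obtain p q where "\<forall>t. f (a + t *\<^sub>R b) = poly p t" "\<forall>t. g (a + t *\<^sub>R b) = poly q t"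
    by blast
  then show ?case by (intro exI[of _ "p + q"]) simp
next
  case (mult f g)
  then obtain p q where "\<forall>t. f (a + t *\<^sub>R b) = poly p t" "\<forall>t. g (a + t *\<^sub>R b) = poly q t"
    by blast
  then show ?case by (intro exI[of _ "p * q"]) simp
qed

lemma poly_fun_nonzero_dense:
  assumes f: "poly_fun f" and v0: "f v0 \<noteq> 0"
  shows "closure {v. f v \<noteq> 0} = UNIV"
proof (intro set_eqI iffI UNIV_I)
  fix w
  let ?line = "\<lambda>t::real. w + t *\<^sub>R (v0 - w)"
  obtain p where p: "\<And>t. f (?line t) = poly p t"
    using poly_fun_along_line[OF f] by blast
  have "p \<noteq> 0"
    using p[of 1] v0 by auto
  then have "finite {t. poly p t = 0}"
    by (rule poly_roots_finite)
  then have "eventually (\<lambda>t. t \<notin> {t. poly p t = 0}) (at 0)"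
    using islimpt_finite islimpt_iff_eventually by blast
  then have near: "eventually (\<lambda>t. ?line t \<in> closure {v. f v \<noteq> 0}) (at 0)"
    by eventually_elim (rule closure_subset[THEN subsetD], simp add: p)
  have "(?line \<longlongrightarrow> w + 0 *\<^sub>R (v0 - w)) (at 0)"
    by (intro tendsto_intros)
  then show "w \<in> closure {v. f v \<noteq> 0}"
    using Lim_in_closed_set[OF closed_closure near at_neq_bot] by simp
qed

lemma matrix_inv_mult:
  fixes A :: "'a::semiring_1^'n^'n"
  assumes "invertible A"
  shows "A ** matrix_inv A = mat 1" "matrix_inv A ** A = mat 1"
  using someI_ex[OF assms[unfolded invertible_def]] by (simp_all add: matrix_inv_def)

lemma sum_matrix_vector_mult:
  "finite K \<Longrightarrow> (\<Sum>k\<in>K. F k) *v y = (\<Sum>k\<in>K. F k *v (y::'a::comm_semiring_1^'n))"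
  by (induction K rule: finite_induct) (auto simp: matrix_vector_mult_add_rdistrib)

lemma mpow_0: "mpow M 0 = mat 1"
  by (simp add: mpow_def)

lemma mpow_Suc: "mpow M (Suc k) = M ** mpow M k"
  by (simp add: mpow_def)

lemma mpow_conj_mult_vector:
  assumes "Ti ** T = mat 1"
  shows "mpow (T ** M ** Ti) k *v (T *v y) = T *v (mpow M k *v y)"
proof (induction k)
  case 0
  show ?case by (simp add: mpow_0)
next
  case (Suc k)
  have "mpow (T ** M ** Ti) (Suc k) *v (T *v y) = (T ** M ** Ti) *v (T *v (mpow M k *v y))"
    by (simp add: mpow_Suc Suc matrix_vector_mul_assoc[symmetric])
  also have "\<dots> = T *v (M *v ((Ti ** T) *v (mpow M k *v y)))"
    by (simp add: matrix_vector_mul_assoc matrix_mul_assoc)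
  finally show ?case
    by (simp add: assms mpow_Suc matrix_vector_mul_assoc)
qed

lemma continuous_on_matrix_mult [continuous_intros]:
  fixes A B :: "'a::topological_space \<Rightarrow> real^'n^'n"
  assumes "continuous_on U A" "continuous_on U B"
  shows "continuous_on U (\<lambda>v. A v ** B v)"
  unfolding matrix_matrix_mult_def by (intro continuous_intros assms)

lemma continuous_on_matrix_vector_mult [continuous_intros]:
  fixes A :: "'a::topological_space \<Rightarrow> real^'n^'n"
  assumes "continuous_on U A" "continuous_on U x"
  shows "continuous_on U (\<lambda>v. A v *v x v)"
  unfolding matrix_vector_mult_def by (intro continuous_intros assms)

lemma continuous_on_mpow [continuous_intros]:
  fixes A :: "'a::topological_space \<Rightarrow> real^'n^'n"
  assumes "continuous_on U A"
  shows "continuous_on U (\<lambda>v. mpow (A v) k)"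
  by (induction k) (simp_all add: mpow_0 mpow_Suc continuous_on_matrix_mult assms)

lemma continuous_on_poly_matrix:
  assumes "\<And>i j. poly_fun (\<lambda>v. S v $ i $ j)"
  shows "continuous_on U S"
proof -
  have "continuous_on U (\<lambda>v. \<chi> i j. S v $ i $ j)"
    by (intro continuous_on_vec_lambda poly_fun_continuous_on assms)
  then show ?thesis by simp
qed

lemma continuous_on_Amat:
  assumes "continuous_on U S"
  shows "continuous_on U (Amat Gm S lam l n)"
  unfolding Amat_def gform_def by (intro continuous_intros assms)

lemma Amat_mult_vector:
  "Amat Gm S lam l n v *v y = mpow (S v) (2*l) *v y +
     (\<Sum>k\<in>{1..l}. (sigma lam l k * (gform Gm v v) ^ ((2*n+1)*k)) *\<^sub>R (mpow (S v) (2*l - 2*k) *v y))"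
  unfolding Amat_def
  by (simp add: matrix_vector_mult_add_rdistrib sum_matrix_vector_mult scaleR_matrix_vector_assoc)

lemma Amat_conj_mult_vector:
  assumes "Ti ** T = mat 1" and "S (T *v u) = T ** S u ** Ti"
    and "gform Gm (T *v u) (T *v u) = gform Gm u u"
  shows "Amat Gm S lam l n (T *v u) *v (T *v y) = T *v (Amat Gm S lam l n u *v y)"
  unfolding Amat_mult_vector assms(2,3) mpow_conj_mult_vector[OF assms(1)]
  by (simp add: vec.sum matrix_vector_right_distrib matrix_vector_mult_scaleR)

lemma Delta_cancel_poly_factor:
  assumes S: "continuous_on UNIV S" and x: "poly_map x" and f: "poly_fun f" "f v0 \<noteq> 0"
    and fx: "(\<lambda>v. f v *\<^sub>R x v) \<in> Delta Gm S lam l n"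
  shows "x \<in> Delta Gm S lam l n"
proof -
  let ?h = "\<lambda>v. Amat Gm S lam l n v *v x v"
  have dense: "closure {v. f v \<noteq> 0} = UNIV"
    by (rule poly_fun_nonzero_dense[OF f])
  have "?h w = 0" for w
  proof (rule continuous_constant_on_closure[where S = "{v. f v \<noteq> 0}" and f = ?h])
    show "continuous_on (closure {v. f v \<noteq> 0}) ?h"
      unfolding dense using continuous_on_Amat[OF S] poly_map_continuous_on[OF x]
      by (rule continuous_on_matrix_vector_mult)
    show "w \<in> closure {v. f v \<noteq> 0}"
      by (simp add: dense)
  next
    fix v
    assume "v \<in> {v. f v \<noteq> 0}"
    moreover have "f v *\<^sub>R ?h v = 0"
      using fx by (simp add: Delta_def matrix_vector_mult_scaleR)
    ultimately show "?h v = 0"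
      by simp
  qed
  with x show ?thesis
    by (simp add: Delta_def)
qed

lemma Delta_conj:
  assumes T: "invertible T"
    and S_equiv: "\<And>u. S (T *v u) = T ** S u ** matrix_inv T"
    and T_isom: "\<And>u. gform Gm (T *v u) (T *v u) = gform Gm u u"
    and x: "x \<in> Delta Gm S lam l n"
  shows "(\<lambda>v. T *v x (matrix_inv T *v v)) \<in> Delta Gm S lam l n"
proof -
  have "poly_map (\<lambda>v. matrix_inv T *v v)"
    by (rule poly_map_matrix_vector_mult[OF poly_map_id])
  with x have "poly_map (\<lambda>v. T *v x (matrix_inv T *v v))"
    by (auto simp: Delta_def intro: poly_map_matrix_vector_mult poly_map_compose)
  moreover have "Amat Gm S lam l n v *v (T *v x (matrix_inv T *v v)) = 0" for v
  proof -
    define u where "u = matrix_inv T *v v"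
    have v: "v = T *v u"
      by (simp add: u_def matrix_vector_mul_assoc matrix_inv_mult[OF T])
    have "Amat Gm S lam l n (T *v u) *v (T *v x u) = T *v (Amat Gm S lam l n u *v x u)"
      by (rule Amat_conj_mult_vector[where Ti = "matrix_inv T"])
        (simp_all add: matrix_inv_mult T S_equiv T_isom)
    also have "\<dots> = 0"
      using x by (simp add: Delta_def)
    finally show ?thesis
      unfolding u_def[symmetric] using v by simp
  qed
  ultimately show ?thesis
    by (simp add: Delta_def)
qed

theorem lemma5p4:
  fixes Gm :: "real^'d^'d" and G :: "(real^'d^'d) set"
    and S :: "real^'d \<Rightarrow> real^'d^'d" and p q n l :: nat and lam :: "nat \<Rightarrow> real"
  assumes sig: "has_signature Gm p q" and pq: "2 \<le> p" "p < q" and dim: "CARD('d) = p + q"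
    and G_isom: "\<And>T. T \<in> G \<Longrightarrow> invertible T \<and> (\<forall>u w. gform Gm (T *v u) (T *v w) = gform Gm u w)"
    and G_id: "mat 1 \<in> G"
    and G_comp: "\<And>T T'. T \<in> G \<Longrightarrow> T' \<in> G \<Longrightarrow> T ** T' \<in> G"
    and G_inv: "\<And>T. T \<in> G \<Longrightarrow> matrix_inv T \<in> G"
    and loc_iso: "\<And>x y. x \<noteq> 0 \<Longrightarrow> y \<noteq> 0 \<Longrightarrow> gform Gm x x = gform Gm y y \<Longrightarrow>
                    \<exists>T\<in>G. T *v x = y"
    and n1: "1 \<le> n"
    and S_nz: "\<exists>v. S v \<noteq> 0"
    and S_sa: "\<And>v a b. gform Gm (S v *v a) b = gform Gm a (S v *v b)"
    and S_vv: "\<And>v. S v *v v = 0"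
    and S_odd: "\<And>v. S (- v) = - S v"
    and S_equiv: "\<And>T v. T \<in> G \<Longrightarrow> S (T *v v) = T ** S v ** matrix_inv T"
    and S_poly: "\<And>i j. homog_poly_fun (\<lambda>v. S v $ i $ j) (2*n+1)"
    and l1: "1 \<le> l" and lam_pos: "\<And>i. i \<in> {1..l} \<Longrightarrow> lam i > 0"
    and lam_inj: "inj_on lam {1..l}"
    and spec: "\<And>v. gform Gm v v = -1 \<Longrightarrow>
       cspectrum (S v) = insert 0 ((\<lambda>i. complex_of_real (lam i)) ` {1..l}
                                   \<union> (\<lambda>i. complex_of_real (- lam i)) ` {1..l})"
  shows "(\<forall>x f. poly_map x \<longrightarrow> poly_fun f \<longrightarrow> (\<exists>v. f v \<noteq> 0) \<longrightarrow>
              (\<lambda>v. f v *\<^sub>R x v) \<in> Delta Gm S lam l n \<longrightarrow> x \<in> Delta Gm S lam l n)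
       \<and> (\<forall>T x. T \<in> G \<longrightarrow> x \<in> Delta Gm S lam l n \<longrightarrow>
              (\<lambda>v. T *v x (matrix_inv T *v v)) \<in> Delta Gm S lam l n)"
proof (intro conjI allI impI)
  have S_cont: "continuous_on UNIV S"
    using S_poly by (intro continuous_on_poly_matrix) (simp add: homog_poly_fun_def)
  fix x f
  assume "poly_map x" "poly_fun f" "\<exists>v. f v \<noteq> 0" "(\<lambda>v. f v *\<^sub>R x v) \<in> Delta Gm S lam l n"
  then show "x \<in> Delta Gm S lam l n"
    using Delta_cancel_poly_factor[OF S_cont] by blast
next
  fix T x
  assume "T \<in> G" "x \<in> Delta Gm S lam l n"
  then show "(\<lambda>v. T *v x (matrix_inv T *v v)) \<in> Delta Gm S lam l n"
    using Delta_conj G_isom S_equiv by blast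
qed

end
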